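(* Let $\Sigma$ be a dec-DNNF circuit whose root is an $\wedge$-node with exactly two children $u$ and $w$, and let $S\subseteq \textit{IP}(\Sigma)$. Let $S_u=\{t_{var(\Sigma_u)} \mid t\in S\}$ and $S_w=\{t_{var(\Sigma_w)}\mid t\in S\}$. Then $S_u\subseteq \textit{IP}(\Sigma_u)$ and $S_w\subseteq\textit{IP}(\Sigma_w)$, and $S=\textit{IP}(\Sigma)$ if and only if $S_u=\textit{IP}(\Sigma_u)$, $S_w=\textit{IP}(\Sigma_w)$, and $S=\{t_u\wedge t_w \mid t_u\in S_u,\ t_w\in S_w\}$.
   Context: A term is a conjunction of literals (possibly the empty term $t_\emptyset$, equivalent to true). A term $t$ is an implicant of $f$ if $t\models f$, and prime if no term obtained by deleting a literal from $t$ is an implicant. $\textit{IP}(\cdot)$ denotes the set of prime implicants of the function computed by a circuit. A dec-DNNF circuit is a rooted DAG whose leaves are labelled $0$, $1$ or a literal and whose internal nodes are decision nodes (labelled by a variable $x$, with 0-child $u$ and 1-child $w$, computing $(\overline{x}\wedge f_u)\vee(x\wedge f_w)$) or $\wedge$-nodes whose children's subcircuits mention pairwise disjoint sets of variables. For a node $v$, $\Sigma_v$ is the subcircuit rooted at $v$ and $var(\Sigma_v)$ is the set of variables labelling leaves below $v$. For a term $t$ and a set of variables $X$, $t_X$ is the term consisting of the literals of $t$ whose variable is in $X$ (the empty term if there is none). *)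

theory Defs
  imports Main
begin

text \<open>dec-DNNF circuits (represented as trees: sharing in the DAG does not affect the
  computed functions or variable sets).\<close>

datatype 'v circuit =
    CFalse
  | CTrue
  | Lit 'v bool
  | Dec 'v "'v circuit" "'v circuit"
  | And "'v circuit list"

fun eval :: "'v circuit \<Rightarrow> ('v \<Rightarrow> bool) \<Rightarrow> bool" where
  "eval CFalse a = False"
| "eval CTrue a = True"
| "eval (Lit x b) a = (a x = b)"
| "eval (Dec x u w) a = ((\<not> a x \<and> eval u a) \<or> (a x \<and> eval w a))"
| "eval (And cs) a = (\<forall>c\<in>set cs. eval c a)"

text \<open>Variables of a circuit. A decision node on x stands for the subcircuit
  (not x and u) or (x and w), whose leaves include the literals on x, so x is counted.\<close>
fun vars :: "'v circuit \<Rightarrow> 'v set" where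
  "vars CFalse = {}"
| "vars CTrue = {}"
| "vars (Lit x b) = {x}"
| "vars (Dec x u w) = {x} \<union> vars u \<union> vars w"
| "vars (And cs) = (\<Union>c\<in>set cs. vars c)"

fun decDNNF :: "'v circuit \<Rightarrow> bool" where
  "decDNNF CFalse = True"
| "decDNNF CTrue = True"
| "decDNNF (Lit x b) = True"
| "decDNNF (Dec x u w) = (decDNNF u \<and> decDNNF w)"
| "decDNNF (And cs) = ((\<forall>c\<in>set cs. decDNNF c) \<and>
     (\<forall>i<length cs. \<forall>j<length cs. i \<noteq> j \<longrightarrow> vars (cs ! i) \<inter> vars (cs ! j) = {}))"

type_synonym 'v "term" = "('v \<times> bool) set"

definition is_term :: "'v term \<Rightarrow> bool" where
  "is_term t \<longleftrightarrow> finite t \<and> \<not> (\<exists>x. (x, True) \<in> t \<and> (x, False) \<in> t)"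

definition sat_term :: "('v \<Rightarrow> bool) \<Rightarrow> 'v term \<Rightarrow> bool" where
  "sat_term a t \<longleftrightarrow> (\<forall>(x, b)\<in>t. a x = b)"

definition implicant :: "'v term \<Rightarrow> 'v circuit \<Rightarrow> bool" where
  "implicant t C \<longleftrightarrow> is_term t \<and> (\<forall>a. sat_term a t \<longrightarrow> eval C a)"

definition prime_implicant :: "'v term \<Rightarrow> 'v circuit \<Rightarrow> bool" where
  "prime_implicant t C \<longleftrightarrow> implicant t C \<and> (\<forall>l\<in>t. \<not> implicant (t - {l}) C)"

definition IP :: "'v circuit \<Rightarrow> 'v term set" where
  "IP C = {t. prime_implicant t C}"

definition restrict_term :: "'v term \<Rightarrow> 'v set \<Rightarrow> 'v term" where
  "restrict_term t X = {l \<in> t. fst l \<in> X}"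

end

theory Submission
  imports Defs
begin

text \<open>Since \<open>u\<close> and \<open>w\<close> share no variable, and a prime implicant only mentions variables of
  its circuit, the prime implicants of \<open>u \<and> w\<close> are exactly the unions \<open>p \<union> q\<close> of a prime
  implicant \<open>p\<close> of \<open>u\<close> and a prime implicant \<open>q\<close> of \<open>w\<close>, and restriction to \<open>vars u\<close>
  and \<open>vars w\<close> recovers \<open>p\<close> and \<open>q\<close>. Hence \<open>S\<close> is all of \<open>IP (u \<and> w)\<close> iff it is the full
  product of its two projections and these are \<open>IP u\<close> and \<open>IP w\<close>; satisfiability makes
  \<open>IP u\<close> and \<open>IP w\<close> nonempty, so that the projections of \<open>IP (u \<and> w)\<close> are onto.\<close>

lemma eval_cong: "(\<And>x. x \<in> vars c \<Longrightarrow> a x = b x) \<Longrightarrow> eval c a = eval c b"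
  by (induction c) auto

lemma finite_vars: "finite (vars c)"
  by (induction c) auto

lemma decDNNF_And_disjoint_vars:
  assumes "decDNNF (And [u, w])"
  shows "vars u \<inter> vars w = {}"
  using conjunct2[OF assms[unfolded decDNNF.simps], rule_format, of 0 1] by simp

lemma is_term_subset: "is_term t \<Longrightarrow> s \<subseteq> t \<Longrightarrow> is_term s"
  unfolding is_term_def by (meson finite_subset subsetD)

lemma is_term_consistent: "is_term t \<Longrightarrow> (x, v) \<in> t \<Longrightarrow> (x, v') \<in> t \<Longrightarrow> v = v'"
  unfolding is_term_def by (cases v; cases v') auto

lemma implicant_mono: "implicant s c \<Longrightarrow> s \<subseteq> t \<Longrightarrow> is_term t \<Longrightarrow> implicant t c"
  unfolding implicant_def sat_term_def by blast

lemma implicant_And: "implicant t (And cs) \<longleftrightarrow> is_term t \<and> (\<forall>c\<in>set cs. implicant t c)"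
  unfolding implicant_def by auto

lemma prime_implicant_cong:
  "(\<And>a. eval c a = eval d a) \<Longrightarrow> prime_implicant t c \<longleftrightarrow> prime_implicant t d"
  unfolding prime_implicant_def implicant_def by simp

lemma IP_And_commute: "IP (And [w, u]) = IP (And [u, w])"
proof -
  have "eval (And [w, u]) a = eval (And [u, w]) a" for a by auto
  then have "prime_implicant t (And [w, u]) \<longleftrightarrow> prime_implicant t (And [u, w])" for t
    by (rule prime_implicant_cong)
  then show ?thesis unfolding IP_def by simp
qed

lemma prime_implicant_vars:
  assumes "prime_implicant t c" and "(x, b) \<in> t"
  shows "x \<in> vars c"
proof (rule ccontr)
  assume x: "x \<notin> vars c"
  have imp: "implicant t c" and t: "is_term t"
    using assms(1) unfolding prime_implicant_def implicant_def by auto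
  have "implicant (t - {(x, b)}) c"
    unfolding implicant_def
  proof (intro conjI allI impI)
    show "is_term (t - {(x, b)})" using t by (rule is_term_subset) blast
    fix a assume sat: "sat_term a (t - {(x, b)})"
    have "sat_term (a(x := b)) t"
      unfolding sat_term_def
    proof clarify
      fix y v assume yv: "(y, v) \<in> t"
      show "(a(x := b)) y = v"
      proof (cases "y = x")
        case True
        with is_term_consistent[OF t assms(2)] yv show ?thesis by auto
      next
        case False
        with sat yv show ?thesis unfolding sat_term_def by auto
      qed
    qed
    then have "eval c (a(x := b))" using imp unfolding implicant_def by blast
    then show "eval c a" using x by (subst eval_cong[of c a "a(x := b)"]) auto
  qed
  then show False using assms unfolding prime_implicant_def by blast
qed

lemma sat_term_extend:
  assumes "is_term t" and "sat_term a (restrict_term t X)"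
  obtains b where "sat_term b t" and "\<forall>x\<in>X. b x = a x"
proof
  let ?b = "\<lambda>x. if x \<in> X then a x else (x, True) \<in> t"
  show "sat_term ?b t"
    unfolding sat_term_def
  proof clarify
    fix x v assume xv: "(x, v) \<in> t"
    show "?b x = v"
    proof (cases "x \<in> X")
      case True
      with xv assms(2) show ?thesis unfolding sat_term_def restrict_term_def by auto
    next
      case False
      with xv is_term_consistent[OF assms(1) xv, of True] show ?thesis by (cases v) auto
    qed
  qed
qed simp

lemma implicant_restrict_vars:
  assumes "implicant t c"
  shows "implicant (restrict_term t (vars c)) c"
  unfolding implicant_def
proof (intro conjI allI impI)
  have t: "is_term t" using assms unfolding implicant_def by blast
  then show "is_term (restrict_term t (vars c))" by (rule is_term_subset) (auto simp: restrict_term_def)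
  fix a assume "sat_term a (restrict_term t (vars c))"
  with t obtain b where "sat_term b t" and "\<forall>x\<in>vars c. b x = a x"
    by (rule sat_term_extend)
  then show "eval c a" using assms eval_cong[of c b a] unfolding implicant_def by simp
qed

lemma restrict_term_Un:
  "fst ` p \<subseteq> X \<Longrightarrow> fst ` q \<inter> X = {} \<Longrightarrow> restrict_term (p \<union> q) X = p"
  unfolding restrict_term_def by force

lemma prime_implicant_split:
  assumes "prime_implicant t (And [u, w])"
  shows "t = restrict_term t (vars u) \<union> restrict_term t (vars w)"
  using prime_implicant_vars[OF assms] unfolding restrict_term_def by fastforce

lemma prime_implicant_And_restrict:
  assumes disj: "vars u \<inter> vars w = {}" and prime: "prime_implicant t (And [u, w])"
  shows "prime_implicant (restrict_term t (vars u)) u"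
proof -
  let ?tu = "restrict_term t (vars u)" and ?tw = "restrict_term t (vars w)"
  have t: "is_term t" and imp: "implicant t u" "implicant t w"
    using prime unfolding prime_implicant_def implicant_And by auto
  have "\<not> implicant (?tu - {l}) u" if l: "l \<in> ?tu" for l
  proof
    assume "implicant (?tu - {l}) u"
    moreover have "implicant ?tw w" using imp(2) by (rule implicant_restrict_vars)
    moreover have "?tu - {l} \<subseteq> t - {l}" and "?tw \<subseteq> t - {l}"
      using l disj unfolding restrict_term_def by auto
    moreover have "is_term (t - {l})" using t by (rule is_term_subset) blast
    ultimately have "implicant (t - {l}) (And [u, w])"
      unfolding implicant_And by (auto intro: implicant_mono)
    moreover have "l \<in> t" using l unfolding restrict_term_def by simp
    ultimately show False using prime unfolding prime_implicant_def by blast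
  qed
  then show ?thesis
    using implicant_restrict_vars[OF imp(1)] unfolding prime_implicant_def by blast
qed

lemma IP_And_restrict:
  assumes disj: "vars u \<inter> vars w = {}" and t: "t \<in> IP (And [u, w])"
  shows "restrict_term t (vars u) \<in> IP u" and "restrict_term t (vars w) \<in> IP w"
proof -
  have "vars w \<inter> vars u = {}" using disj by blast
  moreover have "t \<in> IP (And [w, u])" using t by (simp only: IP_And_commute[of w u])
  ultimately show "restrict_term t (vars u) \<in> IP u" and "restrict_term t (vars w) \<in> IP w"
    using prime_implicant_And_restrict[OF disj] prime_implicant_And_restrict[of w u] t
    unfolding IP_def by simp_all
qed

lemma prime_implicant_And_Un_left:
  assumes disj: "vars u \<inter> vars w = {}"
    and p: "prime_implicant p u" and q: "prime_implicant q w" and l: "l \<in> p"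
  shows "\<not> implicant (p \<union> q - {l}) (And [u, w])"
proof
  assume "implicant (p \<union> q - {l}) (And [u, w])"
  then have "implicant (restrict_term ((p - {l}) \<union> (q - {l})) (vars u)) u"
    unfolding implicant_And by (auto simp: Un_Diff dest: implicant_restrict_vars)
  moreover have "restrict_term ((p - {l}) \<union> (q - {l})) (vars u) = p - {l}"
    using disj prime_implicant_vars[OF p] prime_implicant_vars[OF q]
    by (intro restrict_term_Un) force+
  ultimately show False using p l unfolding prime_implicant_def by simp
qed

lemma prime_implicant_And_Un:
  assumes disj: "vars u \<inter> vars w = {}" and p: "prime_implicant p u" and q: "prime_implicant q w"
  shows "prime_implicant (p \<union> q) (And [u, w])"
proof -
  have "is_term (p \<union> q)"
    using p q disj prime_implicant_vars[OF p] prime_implicant_vars[OF q]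
    unfolding prime_implicant_def implicant_def is_term_def by blast
  then have "implicant (p \<union> q) (And [u, w])"
    using p q unfolding prime_implicant_def implicant_And by (auto intro: implicant_mono)
  moreover have "\<not> implicant (p \<union> q - {l}) (And [u, w])" if "l \<in> p \<union> q" for l
  proof (cases "l \<in> p")
    case True
    then show ?thesis using prime_implicant_And_Un_left[OF disj p q] by blast
  next
    case False
    with that have "\<not> implicant (q \<union> p - {l}) (And [w, u])"
      using disj by (intro prime_implicant_And_Un_left[OF _ q p]) auto
    then show ?thesis by (simp add: Un_commute implicant_And conj_commute)
  qed
  ultimately show ?thesis unfolding prime_implicant_def by blast
qed

lemma IP_And:
  assumes disj: "vars u \<inter> vars w = {}"
  shows "IP (And [u, w]) = {p \<union> q | p q. p \<in> IP u \<and> q \<in> IP w}"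
proof (intro equalityI subsetI)
  fix t assume t: "t \<in> IP (And [u, w])"
  then have "t = restrict_term t (vars u) \<union> restrict_term t (vars w)"
    unfolding IP_def by (simp add: prime_implicant_split)
  with IP_And_restrict[OF disj t] show "t \<in> {p \<union> q | p q. p \<in> IP u \<and> q \<in> IP w}" by blast
next
  fix t assume "t \<in> {p \<union> q | p q. p \<in> IP u \<and> q \<in> IP w}"
  then show "t \<in> IP (And [u, w])" using prime_implicant_And_Un[OF disj] unfolding IP_def by blast
qed

lemma IP_nonempty:
  assumes "eval c a"
  shows "IP c \<noteq> {}"
proof -
  define T where "T = (\<lambda>x. (x, a x)) ` vars c"
  have "finite T" unfolding T_def using finite_vars by blast
  have "implicant T c"
    unfolding implicant_def
  proof (intro conjI allI impI)
    show "is_term T" using \<open>finite T\<close> unfolding is_term_def T_def by auto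
    fix b assume "sat_term b T"
    then have "b x = a x" if "x \<in> vars c" for x using that unfolding sat_term_def T_def by auto
    then show "eval c b" using assms eval_cong[of c b a] by simp
  qed
  then obtain t where t: "t \<subseteq> T" "implicant t c"
    and least: "\<And>s. s \<subseteq> T \<and> implicant s c \<Longrightarrow> card t \<le> card s"
    using ex_has_least_nat[of "\<lambda>s. s \<subseteq> T \<and> implicant s c" T card] by blast
  have "\<not> implicant (t - {l}) c" if "l \<in> t" for l
    using least[of "t - {l}"] t that card_Diff1_less[of t l] finite_subset[OF t(1) \<open>finite T\<close>]
    by auto
  then show ?thesis using t unfolding IP_def prime_implicant_def by blast
qed

lemma image_restrict_IP_And:
  assumes disj: "vars u \<inter> vars w = {}" and "IP w \<noteq> {}"
  shows "(\<lambda>t. restrict_term t (vars u)) ` IP (And [u, w]) = IP u"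
proof -
  obtain q0 where q0: "q0 \<in> IP w" using assms(2) by blast
  have restr: "restrict_term (p \<union> q) (vars u) = p" if "p \<in> IP u" "q \<in> IP w" for p q
    using that disj prime_implicant_vars unfolding IP_def by (intro restrict_term_Un) force+
  show ?thesis unfolding IP_And[OF disj]
  proof (intro equalityI subsetI)
    fix t assume "t \<in> (\<lambda>t. restrict_term t (vars u)) ` {p \<union> q | p q. p \<in> IP u \<and> q \<in> IP w}"
    then show "t \<in> IP u" using restr by auto
  next
    fix t assume "t \<in> IP u"
    then show "t \<in> (\<lambda>t. restrict_term t (vars u)) ` {p \<union> q | p q. p \<in> IP u \<and> q \<in> IP w}"
      using q0 restr by (intro rev_image_eqI[of "t \<union> q0"]) auto
  qed
qed

theorem proposition8:
  fixes u w :: "'v circuit" and S :: "'v term set"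
  assumes "decDNNF (And [u, w])"
    and "S \<subseteq> IP (And [u, w])"
  shows "(\<lambda>t. restrict_term t (vars u)) ` S \<subseteq> IP u
       \<and> (\<lambda>t. restrict_term t (vars w)) ` S \<subseteq> IP w
       \<and> ((\<exists>a. eval (And [u, w]) a) \<longrightarrow>
           (S = IP (And [u, w]) \<longleftrightarrow>
              ((\<lambda>t. restrict_term t (vars u)) ` S = IP u
             \<and> (\<lambda>t. restrict_term t (vars w)) ` S = IP w
             \<and> S = {tu \<union> tw | tu tw. tu \<in> (\<lambda>t. restrict_term t (vars u)) ` S
                                    \<and> tw \<in> (\<lambda>t. restrict_term t (vars w)) ` S})))"
proof -
  let ?Su = "(\<lambda>t. restrict_term t (vars u)) ` S" and ?Sw = "(\<lambda>t. restrict_term t (vars w)) ` S"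
  \<comment> \<open>Kept opaque: otherwise \<open>blast\<close> substitutes \<open>S = {\<dots> S \<dots>}\<close> into itself forever.\<close>
  define P where "P = {tu \<union> tw | tu tw. tu \<in> ?Su \<and> tw \<in> ?Sw}"
  have uw: "vars u \<inter> vars w = {}" using assms(1) by (rule decDNNF_And_disjoint_vars)
  then have wu: "vars w \<inter> vars u = {}" by blast
  have "?Su \<subseteq> IP u" and "?Sw \<subseteq> IP w" using assms(2) IP_And_restrict[OF uw] by blast+
  moreover have "P = IP (And [u, w])" if "?Su = IP u" and "?Sw = IP w"
    using that unfolding P_def by (simp add: IP_And[OF uw])
  moreover have "?Su = IP u \<and> ?Sw = IP w" if "S = IP (And [u, w])" and "\<exists>a. eval (And [u, w]) a"
  proof -
    from that(2) have "IP u \<noteq> {}" and "IP w \<noteq> {}" by (auto dest: IP_nonempty)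
    then show ?thesis
      using image_restrict_IP_And[OF uw] image_restrict_IP_And[OF wu]
      unfolding that(1) IP_And_commute[of w u] by simp
  qed
  ultimately show ?thesis unfolding P_def[symmetric] by blast
qed

end
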